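(* For any integer $k\ge0$, code-tuple $F$, $i\in[F]$ and $\pmb{b}\in\mathcal{C}^{\ast}$: (i) $\mathcal{P}^k_{F,i}(\pmb{b})=\bar{\mathcal{P}}^k_{F,i}(\pmb{b})\cup\bigcup_{s\in\mathcal{S}_{F,i}(\pmb{b})}\mathcal{P}^k_{F,\tau_i(s)}$; (ii) if $F$ is $k$-bit delay decodable, then $|\mathcal{P}^k_{F,i}(\pmb{b})|=|\bar{\mathcal{P}}^k_{F,i}(\pmb{b})|+\sum_{s\in\mathcal{S}_{F,i}(\pmb{b})}|\mathcal{P}^k_{F,\tau_i(s)}|$; (iii) if $k\ge1$, then $\bar{\mathcal{P}}^k_{F,i}(\pmb{b})=0\mathcal{P}^{k-1}_{F,i}(\pmb{b}0)\cup 1\mathcal{P}^{k-1}_{F,i}(\pmb{b}1)$.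
   Context: $\mathcal{S}$ is a finite source alphabet with $|\mathcal{S}|\ge 2$ and $\mathcal{C}=\{0,1\}$. $\mathcal{A}^k,\mathcal{A}^{\ast},\mathcal{A}^{+}$ are the sequences over $\mathcal{A}$ of length $k$, finite length, finite positive length; $\lambda$ is the empty sequence. $\pmb{x}\preceq\pmb{y}$: $\pmb{x}$ is a prefix of $\pmb{y}$; $\pmb{x}\prec\pmb{y}$: proper prefix. For nonempty $\pmb{x}=x_1\cdots x_n$, $\mathrm{suff}(\pmb{x})=x_2\cdots x_n$. For $c\in\mathcal{C}$ and $\mathcal{A}\subseteq\mathcal{C}^{\ast}$, $c\mathcal{A}=\{c\pmb{a}:\pmb{a}\in\mathcal{A}\}$. A code-tuple $F$ with $m\ge1$ code tables is a tuple of maps $f_0,\dots,f_{m-1}:\mathcal{S}\to\mathcal{C}^{\ast}$ and $\tau_0,\dots,\tau_{m-1}:\mathcal{S}\to\{0,\dots,m-1\}$; $[F]=\{0,\dots,m-1\}$. Define $f_i^{\ast}(\lambda)=\lambda$ and $f_i^{\ast}(\pmb{x})=f_i(x_1)f^{\ast}_{\tau_i(x_1)}(\mathrm{suff}(\pmb{x}))$ for $\pmb{x}=x_1\cdots x_n\ne\lambda$. $\mathcal{S}_{F,i}(\pmb{b})=\{s:f_i(s)=\pmb{b}\}$. For integer $k\ge0$, $\mathcal{P}^k_{F,i}(\pmb{b})$ is the set of $\pmb{c}\in\mathcal{C}^k$ such that some $\pmb{x}=x_1\cdots x_n\in\mathcal{S}^{+}$ satisfies $f_i^{\ast}(\pmb{x})\succeq\pmb{b}\pmb{c}$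 and $f_i(x_1)\succeq\pmb{b}$; $\bar{\mathcal{P}}^k_{F,i}(\pmb{b})$ is the same with $f_i(x_1)\succ\pmb{b}$; $\mathcal{P}^k_{F,i}=\mathcal{P}^k_{F,i}(\lambda)$. $F$ is $k$-bit delay decodable if (i) $\mathcal{P}^k_{F,\tau_i(s)}\cap\bar{\mathcal{P}}^k_{F,i}(f_i(s))=\emptyset$ for all $i\in[F]$, $s\in\mathcal{S}$, and (ii) $\mathcal{P}^k_{F,\tau_i(s)}\cap\mathcal{P}^k_{F,\tau_i(s')}=\emptyset$ whenever $s\ne s'$ and $f_i(s)=f_i(s')$. *)

theory Defs
  imports Main "HOL-Library.Sublist"
begin

text \<open>Coding alphabet C = {0,1} is rendered as bool, with False = 0 and True = 1.
  A code-tuple with m code tables over source alphabet 's is a record of the number m of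
  tables, the maps f_i and the maps tau_i (indexed by i :: nat).\<close>

record 's code_tuple =
  ntab :: nat
  fmap :: "nat \<Rightarrow> 's \<Rightarrow> bool list"
  tmap :: "nat \<Rightarrow> 's \<Rightarrow> nat"

definition code_tuple :: "'s code_tuple \<Rightarrow> bool" where
  "code_tuple F \<longleftrightarrow> ntab F \<ge> 1 \<and> (\<forall>i<ntab F. \<forall>s. tmap F i s < ntab F)"

definition idx :: "'s code_tuple \<Rightarrow> nat set" where
  "idx F = {0..<ntab F}"

fun fstar :: "'s code_tuple \<Rightarrow> nat \<Rightarrow> 's list \<Rightarrow> bool list" where
  "fstar F i [] = []"
| "fstar F i (x # xs) = fmap F i x @ fstar F (tmap F i x) xs"

definition Sset :: "'s code_tuple \<Rightarrow> nat \<Rightarrow> bool list \<Rightarrow> 's set" where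
  "Sset F i b = {s. fmap F i s = b}"

definition Pset :: "nat \<Rightarrow> 's code_tuple \<Rightarrow> nat \<Rightarrow> bool list \<Rightarrow> bool list set" where
  "Pset k F i b = {c. length c = k \<and> (\<exists>x. x \<noteq> [] \<and> prefix (b @ c) (fstar F i x)
                                     \<and> prefix b (fmap F i (hd x)))}"

definition Pbar :: "nat \<Rightarrow> 's code_tuple \<Rightarrow> nat \<Rightarrow> bool list \<Rightarrow> bool list set" where
  "Pbar k F i b = {c. length c = k \<and> (\<exists>x. x \<noteq> [] \<and> prefix (b @ c) (fstar F i x)
                                     \<and> strict_prefix b (fmap F i (hd x)))}"

abbreviation P0 :: "nat \<Rightarrow> 's code_tuple \<Rightarrow> nat \<Rightarrow> bool list set" where
  "P0 k F i \<equiv> Pset k F i []"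

definition k_bit_delay_decodable :: "nat \<Rightarrow> 's code_tuple \<Rightarrow> bool" where
  "k_bit_delay_decodable k F \<longleftrightarrow>
     (\<forall>i\<in>idx F. \<forall>s. P0 k F (tmap F i s) \<inter> Pbar k F i (fmap F i s) = {}) \<and>
     (\<forall>i\<in>idx F. \<forall>s s'. s \<noteq> s' \<and> fmap F i s = fmap F i s' \<longrightarrow>
        P0 k F (tmap F i s) \<inter> P0 k F (tmap F i s') = {})"

end

theory Submission
  imports Defs
begin

text \<open>A witness for c in P^k_{F,i}(b) is a source word whose first codeword extends b.
  Either that codeword is b itself, and the rest of the witness, encoded from table tau_i(s),
  puts c into P^k of that table; or it extends b strictly, which defines the barred set.
  For a k-bit delay decodable code-tuple all these sets are pairwise disjoint, whence the
  cardinality formula. If the first codeword extends b strictly, its bit after b is the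
  first bit d of c, so the remaining k - 1 bits lie in P^(k-1)(b d).\<close>

lemma finite_lists_length_eq_UNIV: "finite {xs :: 'a::finite list. length xs = n}"
  using finite_lists_length_eq[of "UNIV :: 'a set" n] by simp

lemma finite_Pset: "finite (Pset k F i b)"
  by (rule finite_subset[OF _ finite_lists_length_eq_UNIV[of k]]) (auto simp: Pset_def)

lemma finite_Pbar: "finite (Pbar k F i b)"
  by (rule finite_subset[OF _ finite_lists_length_eq_UNIV[of k]]) (auto simp: Pbar_def)

lemma ex_neq_Nil_iff: "(\<exists>xs. xs \<noteq> [] \<and> P xs) \<longleftrightarrow> (\<exists>x xs. P (x # xs))"
  by (metis list.distinct(1) neq_Nil_conv)

lemma mem_Pset_iff:
  "c \<in> Pset k F i b \<longleftrightarrow> length c = k \<and>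
     (\<exists>s x. prefix (b @ c) (fmap F i s @ fstar F (tmap F i s) x) \<and> prefix b (fmap F i s))"
  unfolding Pset_def mem_Collect_eq ex_neq_Nil_iff by simp

lemma mem_Pbar_iff:
  "c \<in> Pbar k F i b \<longleftrightarrow> length c = k \<and>
     (\<exists>s x. prefix (b @ c) (fmap F i s @ fstar F (tmap F i s) x) \<and> strict_prefix b (fmap F i s))"
  unfolding Pbar_def mem_Collect_eq ex_neq_Nil_iff by simp

lemma mem_P0_iff: "c \<in> P0 k F j \<longleftrightarrow> length c = k \<and> (\<exists>x. prefix c (fstar F j x))"
proof -
  have "(\<exists>s x. prefix c (fstar F j (s # x))) \<longleftrightarrow> (\<exists>x. prefix c (fstar F j x))"
  proof
    assume "\<exists>x. prefix c (fstar F j x)"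
    then obtain x where "prefix c (fstar F j x)" ..
    \<comment> \<open>if x is empty then so is c, and any nonempty source word is a witness\<close>
    then show "\<exists>s x. prefix c (fstar F j (s # x))" by (cases x) auto
  qed blast
  then show ?thesis by (simp add: mem_Pset_iff)
qed

lemma Pset_eq_Pbar_Un: "Pset k F i b = Pbar k F i b \<union> (\<Union>s\<in>Sset F i b. P0 k F (tmap F i s))"
proof (intro equalityI subsetI)
  fix c assume "c \<in> Pset k F i b"
  then obtain s x where len: "length c = k"
    and pre: "prefix (b @ c) (fmap F i s @ fstar F (tmap F i s) x)" and pb: "prefix b (fmap F i s)"
    unfolding mem_Pset_iff by blast
  show "c \<in> Pbar k F i b \<union> (\<Union>s\<in>Sset F i b. P0 k F (tmap F i s))"
  proof (cases "fmap F i s = b")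
    case True
    with pre have "prefix c (fstar F (tmap F i s) x)" by simp
    with len have "c \<in> P0 k F (tmap F i s)" unfolding mem_P0_iff by blast
    with True show ?thesis unfolding Sset_def by blast
  next
    case False
    with pb have "strict_prefix b (fmap F i s)" by (simp add: strict_prefix_def)
    with pre len have "c \<in> Pbar k F i b" unfolding mem_Pbar_iff by blast
    then show ?thesis ..
  qed
next
  fix c assume "c \<in> Pbar k F i b \<union> (\<Union>s\<in>Sset F i b. P0 k F (tmap F i s))"
  then show "c \<in> Pset k F i b"
  proof
    assume "c \<in> Pbar k F i b"
    then show ?thesis unfolding mem_Pbar_iff mem_Pset_iff strict_prefix_def by blast
  next
    assume "c \<in> (\<Union>s\<in>Sset F i b. P0 k F (tmap F i s))"
    then obtain s where sb: "fmap F i s = b" and "c \<in> P0 k F (tmap F i s)"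
      unfolding Sset_def by blast
    then obtain x where len: "length c = k" and pre: "prefix c (fstar F (tmap F i s) x)"
      unfolding mem_P0_iff by blast
    from sb pre have "prefix (b @ c) (fmap F i s @ fstar F (tmap F i s) x)" "prefix b (fmap F i s)"
      by simp_all
    with len show ?thesis unfolding mem_Pset_iff by blast
  qed
qed

lemma k_bit_delay_decodableD:
  assumes "k_bit_delay_decodable k F" and "i \<in> idx F"
  shows "P0 k F (tmap F i s) \<inter> Pbar k F i (fmap F i s) = {}"
    and "s \<noteq> s' \<Longrightarrow> fmap F i s = fmap F i s' \<Longrightarrow> P0 k F (tmap F i s) \<inter> P0 k F (tmap F i s') = {}"
  using assms unfolding k_bit_delay_decodable_def by simp_all

lemma card_Pset_eq:
  fixes F :: "'s::finite code_tuple"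
  assumes "k_bit_delay_decodable k F" and "i \<in> idx F"
  shows "card (Pset k F i b) = card (Pbar k F i b) + (\<Sum>s\<in>Sset F i b. card (P0 k F (tmap F i s)))"
proof -
  have disjoint_Pbar: "P0 k F (tmap F i s) \<inter> Pbar k F i b = {}" if "s \<in> Sset F i b" for s
    using k_bit_delay_decodableD(1)[OF assms, of s] that by (simp add: Sset_def)
  have disjoint_P0: "P0 k F (tmap F i s) \<inter> P0 k F (tmap F i s') = {}"
    if "s \<in> Sset F i b" "s' \<in> Sset F i b" "s \<noteq> s'" for s s'
    using k_bit_delay_decodableD(2)[OF assms, of s s'] that by (simp add: Sset_def)
  have disjoint: "Pbar k F i b \<inter> (\<Union>s\<in>Sset F i b. P0 k F (tmap F i s)) = {}"
    using disjoint_Pbar by blast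
  have "card (Pset k F i b) = card (Pbar k F i b \<union> (\<Union>s\<in>Sset F i b. P0 k F (tmap F i s)))"
    \<comment> \<open>not by unfolding: P0 is Pset itself, so the equation would loop\<close>
    by (rule arg_cong[OF Pset_eq_Pbar_Un])
  also have "\<dots> = card (Pbar k F i b) + card (\<Union>s\<in>Sset F i b. P0 k F (tmap F i s))"
    using disjoint by (simp add: card_Un_disjoint finite_Pbar finite_Pset)
  also have "card (\<Union>s\<in>Sset F i b. P0 k F (tmap F i s)) = (\<Sum>s\<in>Sset F i b. card (P0 k F (tmap F i s)))"
    using disjoint_P0 by (intro card_UN_disjoint) (simp_all add: finite_Pset)
  finally show ?thesis .
qed

lemma prefix_snoc_if_strict_prefix:
  assumes "strict_prefix b w" and "prefix (b @ d # c) (w @ r)"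
  shows "prefix (b @ [d]) w"
proof -
  from assms(1) obtain e t where w: "w = b @ e # t" by (rule strict_prefixE')
  with assms(2) have "d = e" by simp
  with w show ?thesis by simp
qed

lemma Cons_mem_Pbar_iff: "d # c \<in> Pbar (Suc k) F i b \<longleftrightarrow> c \<in> Pset k F i (b @ [d])"
proof
  assume "d # c \<in> Pbar (Suc k) F i b"
  then obtain s x where len: "length c = k"
    and pre: "prefix (b @ d # c) (fmap F i s @ fstar F (tmap F i s) x)"
    and pb: "strict_prefix b (fmap F i s)"
    unfolding mem_Pbar_iff by auto
  from pb pre have "prefix (b @ [d]) (fmap F i s)" by (rule prefix_snoc_if_strict_prefix)
  moreover from pre have "prefix ((b @ [d]) @ c) (fmap F i s @ fstar F (tmap F i s) x)" by simp
  ultimately show "c \<in> Pset k F i (b @ [d])" using len unfolding mem_Pset_iff by blast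
next
  assume "c \<in> Pset k F i (b @ [d])"
  then obtain s x where len: "length c = k"
    and pre: "prefix ((b @ [d]) @ c) (fmap F i s @ fstar F (tmap F i s) x)"
    and pb: "prefix (b @ [d]) (fmap F i s)"
    unfolding mem_Pset_iff by blast
  have "strict_prefix b (fmap F i s)"
    by (rule prefix_order.less_le_trans[OF _ pb]) (simp add: strict_prefix_def)
  moreover from pre have "prefix (b @ d # c) (fmap F i s @ fstar F (tmap F i s) x)" by simp
  ultimately show "d # c \<in> Pbar (Suc k) F i b" using len unfolding mem_Pbar_iff by auto
qed

lemma Pbar_Suc_eq:
  "Pbar (Suc k) F i b = Cons False ` Pset k F i (b @ [False]) \<union> Cons True ` Pset k F i (b @ [True])"
proof (intro equalityI subsetI)
  fix c assume c: "c \<in> Pbar (Suc k) F i b"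
  then obtain d c' where "c = d # c'" by (cases c) (simp_all add: Pbar_def)
  with c show "c \<in> Cons False ` Pset k F i (b @ [False]) \<union> Cons True ` Pset k F i (b @ [True])"
    by (cases d) (simp_all add: Cons_mem_Pbar_iff)
qed (auto simp: Cons_mem_Pbar_iff)

theorem lemma3:
  fixes F :: "'a::finite code_tuple" and k i :: nat and b :: "bool list"
  assumes "card (UNIV :: 'a set) \<ge> 2" and "code_tuple F" and "i \<in> idx F"
  shows "(Pset k F i b = Pbar k F i b \<union> (\<Union>s\<in>Sset F i b. P0 k F (tmap F i s)))
       \<and> (k_bit_delay_decodable k F \<longrightarrow>
           card (Pset k F i b) = card (Pbar k F i b) + (\<Sum>s\<in>Sset F i b. card (P0 k F (tmap F i s))))
       \<and> (k \<ge> 1 \<longrightarrow>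
           Pbar k F i b = (Cons False) ` Pset (k - 1) F i (b @ [False])
                        \<union> (Cons True) ` Pset (k - 1) F i (b @ [True]))"
proof (intro conjI impI)
  show "Pset k F i b = Pbar k F i b \<union> (\<Union>s\<in>Sset F i b. P0 k F (tmap F i s))"
    by (rule Pset_eq_Pbar_Un)
next
  assume "k_bit_delay_decodable k F"
  then show "card (Pset k F i b) = card (Pbar k F i b) + (\<Sum>s\<in>Sset F i b. card (P0 k F (tmap F i s)))"
    using assms(3) by (rule card_Pset_eq)
next
  assume "k \<ge> 1"
  then obtain k' where "k = Suc k'" by (cases k) auto
  then show "Pbar k F i b = (Cons False) ` Pset (k - 1) F i (b @ [False])
                        \<union> (Cons True) ` Pset (k - 1) F i (b @ [True])"
    by (simp add: Pbar_Suc_eq)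
qed

end
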